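(* Let $k$ be a field of characteristic zero and let $A=k[x,y]/(x^a,y^b)$ with $a,b\in\{0,1,2,\dots\}\cup\{\infty\}$ (a Clements-Lindström ring of embedding dimension two). Then every homogeneous ideal $I$ of $A$ (not necessarily monomial) has the strong Lefschetz property as a graded $A$-module.
   Context: Here $x^\infty$ (resp. $y^\infty$) is interpreted as $0$, so e.g. $a=\infty$ means no power of $x$ is imposed as a relation. $A$ is standard graded. A graded $A$-module $M=\bigoplus_i M_i$ with finite-dimensional graded pieces has the strong Lefschetz property if there exists a linear form $\ell\in A_1$ such that the multiplication map $\times\ell^d\colon M_i\to M_{i+d}$ has maximal rank (is injective or surjective) for all $d>0$ and all $i$. *)

theory Defs
  imports "HOL-Computational_Algebra.Polynomial" "HOL-Library.Extended_Nat"
begin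

text \<open>Bivariate polynomials k[x,y] are modelled as 'k poly poly: the outer variable is y,
  the inner variable is x, so the coefficient of x^i y^j in p is coeff (coeff p j) i.\<close>

definition cx :: "'k::comm_ring_1 poly poly \<Rightarrow> nat \<Rightarrow> nat \<Rightarrow> 'k" where
  "cx p i j = coeff (coeff p j) i"

definition var_x :: "'k::comm_ring_1 poly poly" where
  "var_x = [:[:0, 1:]:]"

definition var_y :: "'k::comm_ring_1 poly poly" where
  "var_y = [:0, 1:]"

text \<open>Truncation k[x,y] -> A = k[x,y]/(x^a, y^b): kill all monomials x^i y^j with
  i \<ge> a or j \<ge> b (a, b = \<infinity> means no relation). Elements of A are represented by
  their unique normal forms.\<close>

definition trunc :: "enat \<Rightarrow> enat \<Rightarrow> 'k::comm_ring_1 poly poly \<Rightarrow> 'k poly poly" where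
  "trunc a b p = (\<Sum>j\<le>degree p. monom (\<Sum>i\<le>degree (coeff p j).
       if enat i < a \<and> enat j < b then monom (coeff (coeff p j) i) i else 0) j)"

definition CL_ring :: "enat \<Rightarrow> enat \<Rightarrow> 'k::comm_ring_1 poly poly set" where
  "CL_ring a b = {p. trunc a b p = p}"

definition CL_mult :: "enat \<Rightarrow> enat \<Rightarrow> 'k::comm_ring_1 poly poly \<Rightarrow> 'k poly poly \<Rightarrow> 'k poly poly" where
  "CL_mult a b p q = trunc a b (p * q)"

definition homogeneous :: "nat \<Rightarrow> 'k::comm_ring_1 poly poly \<Rightarrow> bool" where
  "homogeneous d p \<longleftrightarrow> (\<forall>i j. cx p i j \<noteq> 0 \<longrightarrow> i + j = d)"

definition homog_part :: "nat \<Rightarrow> 'k::comm_ring_1 poly poly \<Rightarrow> 'k poly poly" where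
  "homog_part d p = (\<Sum>j\<le>d. monom (monom (coeff (coeff p j) (d - j)) (d - j)) j)"

definition CL_homog_ideal :: "enat \<Rightarrow> enat \<Rightarrow> 'k::comm_ring_1 poly poly set \<Rightarrow> bool" where
  "CL_homog_ideal a b I \<longleftrightarrow>
     I \<subseteq> CL_ring a b \<and> 0 \<in> I \<and>
     (\<forall>p\<in>I. \<forall>q\<in>I. p + q \<in> I) \<and>
     (\<forall>r\<in>CL_ring a b. \<forall>p\<in>I. CL_mult a b r p \<in> I) \<and>
     (\<forall>p\<in>I. \<forall>d. homog_part d p \<in> I)"

definition graded_piece :: "'k::comm_ring_1 poly poly set \<Rightarrow> nat \<Rightarrow> 'k poly poly set" where
  "graded_piece M d = {p \<in> M. homogeneous d p}"

definition strong_lefschetz :: "enat \<Rightarrow> enat \<Rightarrow> 'k::comm_ring_1 poly poly set \<Rightarrow> bool" where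
  "strong_lefschetz a b M \<longleftrightarrow>
     (\<exists>l \<in> graded_piece (CL_ring a b) 1.
        \<forall>d>0. \<forall>i. inj_on (\<lambda>f. trunc a b (l ^ d * f)) (graded_piece M i) \<or>
                  (\<lambda>f. trunc a b (l ^ d * f)) ` graded_piece M i = graded_piece M (i + d))"

end

theory Submission
  imports Defs
begin

text \<open>Setting \<open>x = 1\<close> identifies the degree-\<open>n\<close> part \<open>A\<^sub>n\<close> with the polynomials in \<open>y\<close> supported
  in a window of exponents, multiplication by \<open>(y - c x)\<^sup>d\<close> with multiplication by \<open>(y - c)\<^sup>d\<close>
  followed by truncation to the window, and multiplication into the socle degree \<open>N = a + b - 2\<close>
  with a perfect pairing between \<open>A\<^sub>n\<close> and \<open>A\<^bsub>N-n\<^esub>\<close>. Let \<open>V\<^sub>n\<close> be the annihilator of \<open>I\<^sub>n\<close> under this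
  pairing and \<open>m = dim V\<^sub>n\<close>. If no nonzero element of \<open>V\<^sub>n\<close> is divisible by \<open>(y - c)\<^sup>m\<close>, then for
  \<open>d < m\<close> every monomial is congruent modulo \<open>V\<^sub>n\<close> to a multiple of \<open>(y - c)\<^sup>d\<close>, which makes
  multiplication by \<open>(y - c x)\<^sup>d\<close> injective on \<open>I\<^sub>n\<close>; for \<open>d \<ge> m\<close> the image of \<open>I\<^sub>n\<close> has trivial
  annihilator and hence is all of \<open>A\<^bsub>n+d\<^esub>\<close>. A Wronskian argument, which needs characteristic zero,
  shows that each \<open>V\<^sub>n\<close> excludes only finitely many \<open>c\<close>. If \<open>a\<close> or \<open>b\<close> is \<open>0\<close> the ring is zero,
  and if \<open>a = \<infinity>\<close> (\<open>b = \<infinity>\<close>) then \<open>x\<close> (\<open>y\<close>) is a non-zero-divisor.\<close>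

section \<open>Roots of high order in spaces of polynomials\<close>

interpretation poly_vs: vector_space "smult :: 'a::field \<Rightarrow> 'a poly \<Rightarrow> 'a poly"
  by unfold_locales (auto simp: smult_add_right smult_add_left)

lemma module_hom_smult_iff:
  "module_hom (smult :: 'a::field \<Rightarrow> 'a poly \<Rightarrow> 'a poly) smult f \<longleftrightarrow>
     (\<forall>p q. f (p + q) = f p + f q) \<and> (\<forall>c p. f (smult c p) = smult c (f p))"
  by (auto simp: module_hom_iff poly_vs.module_axioms)

lemma in_span_monoms:
  fixes q :: "'a::field poly"
  assumes "\<And>k. coeff q k \<noteq> 0 \<Longrightarrow> k \<in> K"
  shows "q \<in> poly_vs.span ((\<lambda>k. monom 1 k) ` K)"
proof -
  have "q = (\<Sum>k\<le>degree q. smult (coeff q k) (monom 1 k))"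
    by (simp add: smult_monom poly_as_sum_of_monoms)
  also have "\<dots> \<in> poly_vs.span ((\<lambda>k. monom 1 k) ` K)"
    using assms by (intro poly_vs.span_sum) (metis image_eqI poly_vs.span_base poly_vs.span_scale
      poly_vs.span_zero smult_0_left)
  finally show ?thesis .
qed

lemma degree_le_subset_span_monoms:
  "{q :: 'a::field poly. degree q \<le> n} \<subseteq> poly_vs.span ((\<lambda>k. monom 1 k) ` {..n})"
  using le_degree order_trans by (fastforce intro!: in_span_monoms)

lemma span_subset_of_independent_card_ge:
  assumes "finite M" "poly_vs.independent S" "S \<subseteq> poly_vs.span M" "card M \<le> card S"
  shows "poly_vs.span M \<subseteq> poly_vs.span (S :: 'a::field poly set)"
proof
  fix x assume x: "x \<in> poly_vs.span M"
  show "x \<in> poly_vs.span S"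
  proof (rule ccontr)
    assume "x \<notin> poly_vs.span S"
    then have indep: "poly_vs.independent (insert x S)" and "x \<notin> S"
      using assms(2) poly_vs.span_base by (auto simp: poly_vs.independent_insert)
    have "insert x S \<subseteq> poly_vs.span M" using assms(3) x by simp
    then have "finite (insert x S) \<and> card (insert x S) \<le> card M"
      by (rule poly_vs.independent_span_bound[OF assms(1) indep])
    then show False using assms(4) \<open>x \<notin> S\<close> by auto
  qed
qed

lemma independent_monoms: "poly_vs.independent ((\<lambda>k. monom 1 k) ` K :: 'a::field poly set)"
proof
  assume "poly_vs.dependent ((\<lambda>k. monom 1 k) ` K :: 'a poly set)"
  then obtain j where "j \<in> K" and
    "monom 1 j \<in> poly_vs.span ((\<lambda>k. monom 1 k) ` K - {monom 1 j} :: 'a poly set)"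
    unfolding poly_vs.dependent_def by blast
  moreover have "(\<lambda>k. monom 1 k) ` K - {monom 1 j} \<subseteq> ((\<lambda>k. monom 1 k) ` (K - {j}) :: 'a poly set)"
    by auto
  ultimately have "monom 1 j \<in> poly_vs.span ((\<lambda>k. monom 1 k) ` (K - {j}) :: 'a poly set)"
    using poly_vs.span_mono by blast
  moreover have "poly_vs.span ((\<lambda>k. monom 1 k) ` (K - {j})) \<subseteq> {p :: 'a poly. coeff p j = 0}"
    by (rule poly_vs.span_minimal) (auto simp: poly_vs.subspace_def coeff_monom)
  ultimately show False by auto
qed

lemma card_monoms: "card ((\<lambda>k. monom (1 :: 'a::zero_neq_one) k) ` K) = card K"
  by (rule card_image) (auto simp: inj_on_def monom_eq_iff')

text \<open>Pairing against the finitely many vectors of \<open>B\<close> embeds \<open>span S\<close> into \<open>k\<^bsup>card B\<^esup>\<close>.\<close>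
lemma independent_card_le_if_separating:
  fixes P :: "'a::field poly \<Rightarrow> 'b \<Rightarrow> 'a"
  assumes B: "finite B" and S: "poly_vs.independent S"
    and linear: "\<And>g h u. P (g + h) u = P g u + P h u" "\<And>c g u. P (smult c g) u = c * P g u"
    and separating: "\<And>g. g \<in> poly_vs.span S \<Longrightarrow> \<forall>u\<in>B. P g u = 0 \<Longrightarrow> g = 0"
  shows "card S \<le> card B"
proof -
  obtain e where e: "bij_betw e B {..<card B}" using ex_bij_betw_finite_nat[OF B] by (metis atLeast0LessThan)
  define \<rho> where "\<rho> g = (\<Sum>u\<in>B. smult (P g u) (monom 1 (e u)))" for g
  interpret R: module_hom smult smult \<rho>
    unfolding module_hom_smult_iff \<rho>_def
    by (simp add: linear smult_add_left sum.distrib poly_vs.scale_sum_right)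
  have coeff_\<rho>: "coeff (\<rho> g) (e u) = P g u" if u: "u \<in> B" for g u
  proof -
    have "coeff (\<rho> g) (e u) = (\<Sum>v\<in>B. if v = u then P g v else 0)"
      unfolding \<rho>_def coeff_sum coeff_smult coeff_monom
      using inj_onD[OF bij_betw_imp_inj_on[OF e] _ _ u] by (intro sum.cong) auto
    then show ?thesis using B u by simp
  qed
  have inj: "inj_on \<rho> (poly_vs.span S)"
    unfolding R.inj_on_iff_eq_0[OF poly_vs.subspace_span]
    using separating coeff_\<rho> by (metis coeff_0)
  have "e ` B \<subseteq> {..<card B}" using e by (simp add: bij_betw_def)
  then have "\<rho> g \<in> poly_vs.span ((\<lambda>k. monom 1 k) ` {..<card B})" for g
    unfolding \<rho>_def by (intro poly_vs.span_sum poly_vs.span_scale poly_vs.span_base) auto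
  then have "card (\<rho> ` S) \<le> card ((\<lambda>k. monom 1 k :: 'a poly) ` {..<card B})"
    using poly_vs.independent_span_bound[OF _ R.independent_injective_image[OF S inj]] by blast
  also have "\<dots> \<le> card B" using card_image_le[of "{..<card B}"] by simp
  finally show ?thesis using card_image[OF inj_on_subset[OF inj poly_vs.span_superset]] by simp
qed

definition wronskian :: "'a::idom poly \<Rightarrow> 'a poly \<Rightarrow> 'a poly" where
  "wronskian p q = p * pderiv q - pderiv p * q"

lemma module_hom_wronskian: "module_hom smult smult (wronskian (p :: 'a::field poly))"
  unfolding module_hom_smult_iff wronskian_def by (auto simp: pderiv_add pderiv_smult algebra_simps)

lemma wronskian_self [simp]: "wronskian p p = 0"
  by (simp add: wronskian_def mult.commute)

lemma degree_eq_if_wronskian_eq_0: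
  fixes p q :: "'a::field_char_0 poly"
  assumes "p \<noteq> 0" "q \<noteq> 0" "wronskian p q = 0"
  shows "degree p = degree q"
proof (cases "degree p = 0 \<or> degree q = 0")
  case True
  then have "pderiv p = 0 \<or> pderiv q = 0" by (simp add: pderiv_eq_0_iff)
  then have "pderiv p = 0 \<and> pderiv q = 0" using assms by (auto simp: wronskian_def)
  then show ?thesis by (simp add: pderiv_eq_0_iff)
next
  case False
  define dp dq where "dp = degree p" and "dq = degree q"
  have "coeff (p * pderiv q) (dp + (dq - 1)) = lead_coeff p * (of_nat dq * lead_coeff q)"
    using False coeff_mult_degree_sum[of p "pderiv q"]
    by (simp add: dp_def dq_def degree_pderiv coeff_pderiv)
  moreover have "coeff (pderiv p * q) ((dp - 1) + dq) = of_nat dp * lead_coeff p * lead_coeff q"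
    using False coeff_mult_degree_sum[of "pderiv p" q]
    by (simp add: dp_def dq_def degree_pderiv coeff_pderiv)
  moreover have "dp + (dq - 1) = (dp - 1) + dq" using False by (simp add: dp_def dq_def)
  ultimately have "lead_coeff p * (of_nat dq * lead_coeff q) = of_nat dp * lead_coeff p * lead_coeff q"
    using assms(3) by (metis eq_iff_diff_eq_0 wronskian_def)
  then show ?thesis using assms(1,2) by (simp add: dp_def dq_def)
qed

lemma wronskian_eq_0_imp_smult:
  fixes p q :: "'a::field_char_0 poly"
  assumes p: "p \<noteq> 0" and W: "wronskian p q = 0"
  obtains \<beta> where "q = smult \<beta> p"
proof -
  define \<beta> where "\<beta> = coeff q (degree p) / lead_coeff p"
  define w where "w = q - smult \<beta> p"
  have "wronskian p w = 0"
    using W by (simp add: w_def wronskian_def pderiv_diff pderiv_smult algebra_simps)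
  moreover have "coeff w (degree p) = 0" using p by (simp add: w_def \<beta>_def)
  ultimately have "w = 0"
    using degree_eq_if_wronskian_eq_0[OF p] by (metis leading_coeff_0_iff)
  then show ?thesis by (intro that[of \<beta>]) (simp add: w_def)
qed

lemma power_dvd_pderiv:
  fixes p r :: "'a::field poly"
  assumes "r ^ Suc m dvd p"
  shows "r ^ m dvd pderiv p"
proof -
  obtain q where p: "p = r ^ Suc m * q" using assms by blast
  have "pderiv p = smult (of_nat (Suc m)) (r ^ m) * pderiv r * q + r ^ m * (r * pderiv q)"
    unfolding p pderiv_mult pderiv_power_Suc by (simp add: algebra_simps)
  then show ?thesis by (simp add: dvd_smult)
qed

lemma inj_on_wronskian_span:
  fixes p :: "'a::field_char_0 poly"
  assumes p: "p \<notin> poly_vs.span B"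
  shows "inj_on (wronskian p) (poly_vs.span B)"
proof -
  interpret W: module_hom smult smult "wronskian p" by (rule module_hom_wronskian)
  have "p \<noteq> 0" using p poly_vs.span_zero by auto
  show ?thesis
    unfolding W.inj_on_iff_eq_0[OF poly_vs.subspace_span]
  proof (intro ballI impI)
    fix q assume q: "q \<in> poly_vs.span B" and "wronskian p q = 0"
    then obtain \<beta> where q_eq: "q = smult \<beta> p" using wronskian_eq_0_imp_smult[OF \<open>p \<noteq> 0\<close>] by blast
    show "q = 0"
    proof (rule ccontr)
      assume "q \<noteq> 0"
      then have "p = smult (inverse \<beta>) q" using q_eq by auto
      then show False using q p poly_vs.span_scale by metis
    qed
  qed
qed

lemma wronskian_root_order:
  fixes p q :: "'a::field_char_0 poly"
  assumes pc: "poly p c \<noteq> 0" and q: "q \<noteq> 0" "[:-c, 1:] ^ Suc m dvd q"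
  shows "wronskian p q \<noteq> 0" and "[:-c, 1:] ^ m dvd wronskian p q"
proof
  assume "wronskian p q = 0"
  moreover have "p \<noteq> 0" using pc by auto
  ultimately obtain \<beta> where "q = smult \<beta> p" using wronskian_eq_0_imp_smult by blast
  moreover have "[:-c, 1:] dvd q" using dvd_trans[OF dvd_power[of "Suc m"] q(2)] by simp
  ultimately have "[:-c, 1:] dvd p" using q(1) by (auto simp: dvd_smult_iff)
  with pc show False by (simp add: poly_eq_0_iff_dvd)
next
  show "[:-c, 1:] ^ m dvd wronskian p q"
    using power_dvd_pderiv[OF q(2)] dvd_trans[OF le_imp_power_dvd[of m "Suc m"] q(2)]
    unfolding wronskian_def by (intro dvd_diff dvd_mult) auto
qed

text \<open>Induction on \<open>card B\<close>: for a basis vector \<open>p\<^sub>0\<close>, the map \<open>wronskian p\<^sub>0\<close> sends the span of the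
  remaining vectors injectively onto a space of one dimension less, and it lowers the order of
  vanishing at every \<open>c\<close> that is not a root of \<open>p\<^sub>0\<close> by exactly one.\<close>
lemma finite_roots_of_order_card_in_span:
  fixes B :: "'a::field_char_0 poly set"
  assumes "finite B" "poly_vs.independent B"
  shows "finite {c. \<exists>p\<in>poly_vs.span B. p \<noteq> 0 \<and> [:-c, 1:] ^ card B dvd p}"
  using assms
proof (induction "card B" arbitrary: B)
  case 0
  then show ?case by simp
next
  case (Suc m)
  obtain p0 B' where B: "B = insert p0 B'" "p0 \<notin> B'" "card B' = m"
    using Suc.hyps(2) by (metis card_Suc_eq)
  have fin: "finite B'" and indep: "poly_vs.independent B'"
    using Suc.prems B poly_vs.independent_mono by auto
  have p0: "p0 \<notin> poly_vs.span B'" using Suc.prems(2) B by (simp add: poly_vs.independent_insert)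
  interpret W: module_hom smult smult "wronskian p0" by (rule module_hom_wronskian)
  note inj = inj_on_wronskian_span[OF p0]
  let ?bad = "\<lambda>S k. {c. \<exists>p\<in>poly_vs.span S. p \<noteq> 0 \<and> [:-c, 1:] ^ k dvd p}"
  have "?bad B (Suc m) \<subseteq> {c. poly p0 c = 0} \<union> ?bad (wronskian p0 ` B') m"
  proof
    fix c assume "c \<in> ?bad B (Suc m)"
    then obtain p where p: "p \<in> poly_vs.span B" "p \<noteq> 0" "[:-c, 1:] ^ Suc m dvd p" by blast
    obtain k where "p - smult k p0 \<in> poly_vs.span B'"
      using p(1) unfolding B poly_vs.span_breakdown_eq by blast
    moreover have "wronskian p0 p = wronskian p0 (p - smult k p0)" by (simp add: W.diff W.scale)
    ultimately have W_in: "wronskian p0 p \<in> poly_vs.span (wronskian p0 ` B')" using W.span_image by auto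
    show "c \<in> {c. poly p0 c = 0} \<union> ?bad (wronskian p0 ` B') m"
    proof (cases "poly p0 c = 0")
      case False
      then show ?thesis using W_in wronskian_root_order[OF False p(2,3)] by blast
    qed simp
  qed
  moreover have "finite (?bad (wronskian p0 ` B') m)"
    using Suc.hyps(1)[of "wronskian p0 ` B'"] fin W.independent_injective_image[OF indep inj]
      card_image[OF inj_on_subset[OF inj poly_vs.span_superset]] B(3) by simp
  moreover have "p0 \<noteq> 0" using p0 poly_vs.span_zero by auto
  then have "finite {c. poly p0 c = 0}" by (rule poly_roots_finite)
  ultimately have "finite (?bad B (Suc m))" by (meson finite_Un finite_subset)
  then show ?case using Suc.hyps(2) by simp
qed

lemma dim_le_Suc_if_degree_le:
  assumes "V \<subseteq> {p :: 'a::field poly. degree p \<le> n}"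
  shows "poly_vs.dim V \<le> Suc n"
proof -
  have "poly_vs.dim V \<le> card ((\<lambda>k. monom 1 k :: 'a poly) ` {..n})"
    using assms degree_le_subset_span_monoms by (intro poly_vs.dim_le_card) auto
  also have "\<dots> \<le> Suc n" using card_image_le[of "{..n}"] by simp
  finally show ?thesis .
qed

lemma degree_le_subspace_basis:
  assumes "poly_vs.subspace V" "V \<subseteq> {p :: 'a::field poly. degree p \<le> n}"
  obtains B where "finite B" "poly_vs.independent B" "poly_vs.span B = V" "card B = poly_vs.dim V"
proof -
  obtain B where B: "B \<subseteq> V" "poly_vs.independent B" "V \<subseteq> poly_vs.span B" "card B = poly_vs.dim V"
    by (rule poly_vs.basis_exists)
  have "B \<subseteq> poly_vs.span ((\<lambda>k. monom 1 k) ` {..n})"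
    using B(1) assms(2) degree_le_subset_span_monoms by blast
  then have "finite B" using poly_vs.independent_span_bound B(2) by blast
  moreover have "poly_vs.span B = V"
    using B(1,3) poly_vs.span_minimal[OF _ assms(1)] by blast
  ultimately show ?thesis using that B by blast
qed

lemma finite_roots_of_order_dim:
  fixes V :: "'a::field_char_0 poly set"
  assumes "poly_vs.subspace V" "V \<subseteq> {p. degree p \<le> n}"
  shows "finite {c. \<exists>p\<in>V. p \<noteq> 0 \<and> [:-c, 1:] ^ poly_vs.dim V dvd p}"
proof -
  obtain B where "finite B" "poly_vs.independent B" "poly_vs.span B = V" "card B = poly_vs.dim V"
    using degree_le_subspace_basis[OF assms] .
  then show ?thesis using finite_roots_of_order_card_in_span[of B] by simp
qed

lemma exists_congruent_mod_in_subspace: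
  fixes r :: "'a::field poly"
  assumes V: "poly_vs.subspace V" "V \<subseteq> {p. degree p \<le> n}"
    and r: "r \<noteq> 0" "degree r = poly_vs.dim V" and trivial: "\<forall>v\<in>V. r dvd v \<longrightarrow> v = 0"
  obtains v where "v \<in> V" "r dvd q - v"
proof -
  obtain B where B: "finite B" "poly_vs.independent B" "poly_vs.span B = V" "card B = degree r"
    using degree_le_subspace_basis[OF V] r(2) by metis
  interpret T: module_hom smult smult "\<lambda>q. q mod r"
    unfolding module_hom_smult_iff by (simp add: poly_mod_add_left mod_smult_left)
  let ?M = "(\<lambda>k. monom 1 k) ` {..<degree r}"
  have in_M: "x mod r \<in> poly_vs.span ?M" for x
  proof (rule in_span_monoms)
    fix k assume "coeff (x mod r) k \<noteq> 0"
    then show "k \<in> {..<degree r}"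
      using le_degree[of "x mod r" k] degree_mod_less[OF r(1), of x] by auto
  qed
  have inj: "inj_on (\<lambda>q. q mod r) V"
    unfolding T.inj_on_iff_eq_0[OF V(1)] using trivial by (auto simp: mod_eq_0_iff_dvd)
  have BV: "B \<subseteq> V" using B(3) poly_vs.span_superset by blast
  have "card ?M \<le> card ((\<lambda>q. q mod r) ` B)"
    using card_image_le[of "{..<degree r}"] card_image[OF inj_on_subset[OF inj BV]] B(4) by simp
  moreover have "poly_vs.independent ((\<lambda>q. q mod r) ` B)"
    using T.independent_injective_image[OF B(2)] inj B(3) by simp
  moreover have "(\<lambda>q. q mod r) ` B \<subseteq> poly_vs.span ?M" using in_M by blast
  ultimately have "poly_vs.span ?M \<subseteq> poly_vs.span ((\<lambda>q. q mod r) ` B)"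
    by (intro span_subset_of_independent_card_ge) simp_all
  also have "\<dots> = (\<lambda>q. q mod r) ` V" using T.span_image B(3) by simp
  finally obtain v where v: "v \<in> V" "q mod r = v mod r" using in_M by blast
  then have "(q - v) mod r = 0" by (simp add: poly_mod_diff_left)
  then show ?thesis using that v(1) by (simp add: mod_eq_0_iff_dvd)
qed

section \<open>The graded pieces of \<open>k[x,y]/(x\<^sup>a, y\<^sup>b)\<close> at \<open>x = 1\<close>\<close>

text \<open>For \<open>A = k[x,y]/(x\<^sup>a, y\<^sup>b)\<close>, the degree-\<open>n\<close> part \<open>A\<^sub>n\<close> has the basis \<open>x\<^bsup>n-j\<^esup> y\<^sup>j\<close> with
  \<open>in_window a b n j\<close>; setting \<open>x = 1\<close> identifies \<open>A\<^sub>n\<close> with \<open>window_space a b n\<close>, and the product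
  \<open>A\<^sub>n \<times> A\<^sub>d \<rightarrow> A\<^bsub>n+d\<^esub>\<close> with multiplication followed by \<open>window_trunc a b (n + d)\<close>.\<close>
definition in_window :: "nat \<Rightarrow> nat \<Rightarrow> nat \<Rightarrow> nat \<Rightarrow> bool" where
  "in_window a b n j \<longleftrightarrow> j \<le> n \<and> n < a + j \<and> j < b"

definition window_space :: "nat \<Rightarrow> nat \<Rightarrow> nat \<Rightarrow> 'a::zero poly set" where
  "window_space a b n = {p. \<forall>j. coeff p j \<noteq> 0 \<longrightarrow> in_window a b n j}"

definition window_trunc :: "nat \<Rightarrow> nat \<Rightarrow> nat \<Rightarrow> 'a::comm_ring_1 poly \<Rightarrow> 'a poly" where
  "window_trunc a b n p = (\<Sum>j | in_window a b n j. monom (coeff p j) j)"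

text \<open>The perfect pairing \<open>A\<^bsub>N-n\<^esub> \<times> A\<^sub>n \<rightarrow> A\<^sub>N = k x\<^bsup>a-1\<^esup>y\<^bsup>b-1\<^esup>\<close>, \<open>N = a + b - 2\<close>, after setting \<open>x = 1\<close>.\<close>
definition socle_pairing :: "nat \<Rightarrow> 'a::comm_ring_1 poly \<Rightarrow> 'a poly \<Rightarrow> 'a" where
  "socle_pairing b g f = coeff (g * f) (b - 1)"

lemma finite_in_window: "finite {j. in_window a b n j}"
  by (rule finite_subset[of _ "{..n}"]) (auto simp: in_window_def)

lemma coeff_window_trunc:
  "coeff (window_trunc a b n p) j = (if in_window a b n j then coeff p j else 0)"
  unfolding window_trunc_def coeff_sum coeff_monom
  using finite_in_window[of a b n] by (simp add: sum.delta)

lemma window_trunc_in_window_space: "window_trunc a b n p \<in> window_space a b n"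
  by (simp add: window_space_def coeff_window_trunc)

lemma module_hom_window_trunc_mult:
  "module_hom smult smult (\<lambda>f. window_trunc a b n (r * f :: 'a::field poly))"
  unfolding module_hom_smult_iff
  by (auto intro!: poly_eqI simp: coeff_window_trunc distrib_left)

lemma degree_le_if_in_window_space: "p \<in> window_space a b n \<Longrightarrow> degree p \<le> n"
  by (rule degree_le) (auto simp: window_space_def in_window_def)

lemma window_space_eq_zero: "a + b - 2 < n \<Longrightarrow> window_space a b n = {0}"
  by (auto simp: window_space_def in_window_def intro!: poly_eqI)

lemma window_space_eq_span:
  "window_space a b n = poly_vs.span ((\<lambda>j. monom 1 j) ` {j. in_window a b n j} :: 'a::field poly set)"
proof
  show "window_space a b n \<subseteq> poly_vs.span ((\<lambda>j. monom 1 j) ` {j. in_window a b n j})"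
    by (auto simp: window_space_def intro: in_span_monoms)
  have "poly_vs.subspace (window_space a b n :: 'a poly set)"
    by (auto simp: poly_vs.subspace_def window_space_def) (metis add.right_neutral)
  then show "poly_vs.span ((\<lambda>j. monom 1 j) ` {j. in_window a b n j}) \<subseteq> (window_space a b n :: 'a poly set)"
    by (rule poly_vs.span_minimal[rotated]) (auto simp: window_space_def coeff_monom split: if_splits)
qed

lemma subspace_window_space: "poly_vs.subspace (window_space a b n :: 'a::field poly set)"
  unfolding window_space_eq_span by simp

lemma card_in_window_flip:
  assumes "1 \<le> b" "n \<le> a + b - 2"
  shows "card {j. in_window a b (a + b - 2 - n) j} = card {j. in_window a b n j}"
proof -
  have "bij_betw (\<lambda>j. b - 1 - j) {j. in_window a b n j} {j. in_window a b (a + b - 2 - n) j}"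
    by (rule bij_betw_byWitness[where f' = "\<lambda>j. b - 1 - j"]) (use assms in \<open>auto simp: in_window_def\<close>)
  then show ?thesis by (simp add: bij_betw_same_card)
qed

lemma socle_pairing_monom: "j < b \<Longrightarrow> socle_pairing b (monom 1 (b - 1 - j)) f = coeff f j"
  by (simp add: socle_pairing_def coeff_monom_mult)

lemma subspace_socle_pairing_eq_0: "poly_vs.subspace {f. socle_pairing b g f = 0}"
  unfolding poly_vs.subspace_def socle_pairing_def by (simp add: algebra_simps)

lemma socle_pairing_window_trunc:
  assumes "1 \<le> a" "1 \<le> b" "n \<le> a + b - 2" "degree g \<le> a + b - 2 - n" "degree f \<le> n"
  shows "socle_pairing b g (window_trunc a b n f) = socle_pairing b g f"
proof -
  have "coeff g k * coeff (f - window_trunc a b n f) (b - 1 - k) = 0" if "k \<le> b - 1" for k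
  proof (cases "coeff g k = 0")
    case False
    then have "k \<le> a + b - 2 - n" using assms(4) le_degree order_trans by blast
    then show ?thesis
      using assms that coeff_eq_0[of f "b - 1 - k"] by (auto simp: coeff_window_trunc in_window_def)
  qed simp
  then have "coeff (g * (f - window_trunc a b n f)) (b - 1) = 0" by (simp add: coeff_mult)
  then show ?thesis by (simp add: socle_pairing_def algebra_simps)
qed

lemma socle_pairing_window_trunc_mult:
  assumes "1 \<le> a" "1 \<le> b" "n + d \<le> a + b - 2" "degree g \<le> a + b - 2 - (n + d)"
    and "degree f \<le> n" "degree r \<le> d"
  shows "socle_pairing b g (window_trunc a b (n + d) (r * f)) = socle_pairing b (r * g) f"
proof -
  have "degree (r * f) \<le> n + d" using degree_mult_le[of r f] assms(5,6) by linarith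
  then have "socle_pairing b g (window_trunc a b (n + d) (r * f)) = socle_pairing b g (r * f)"
    using socle_pairing_window_trunc[OF assms(1-4)] by simp
  then show ?thesis by (simp add: socle_pairing_def algebra_simps)
qed

lemma decompose_mod_subspace:
  fixes V :: "'a::field poly set"
  assumes V: "poly_vs.subspace V" "V \<subseteq> {p. degree p \<le> D}"
    and generic: "\<forall>v\<in>V. [:-c, 1:] ^ poly_vs.dim V dvd v \<longrightarrow> v = 0"
    and d: "d \<le> poly_vs.dim V" and q: "degree q \<le> D"
  obtains v g where "v \<in> V" "q = v + [:-c, 1:] ^ d * g" "degree g \<le> D - d"
proof -
  let ?m = "poly_vs.dim V" and ?r = "[:-c, 1:]"
  have "?r ^ ?m \<noteq> 0" "degree (?r ^ ?m) = ?m" by (simp_all add: degree_power_eq)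
  then obtain v where v: "v \<in> V" "?r ^ ?m dvd q - v"
    using exists_congruent_mod_in_subspace[OF V _ _ generic] by metis
  then obtain w where w: "q - v = ?r ^ ?m * w" by (elim dvdE)
  define g where "g = ?r ^ (?m - d) * w"
  have "q = v + ?r ^ d * g"
    using w d by (simp add: g_def algebra_simps flip: power_add)
  moreover have "degree g \<le> D - d"
  proof (cases "w = 0")
    case False
    have "degree (q - v) \<le> D" using v(1) V(2) q by (auto intro: degree_diff_le)
    then have "?m + degree w \<le> D" using False by (simp add: w degree_mult_eq degree_power_eq)
    then show ?thesis using False d by (simp add: g_def degree_mult_eq degree_power_eq)
  qed (simp add: g_def)
  ultimately show ?thesis using that v(1) by blast
qed

text \<open>Pairing against a basis of \<open>U\<close> embeds \<open>A\<^bsub>N-n\<^esub>\<close> into \<open>k\<^bsup>dim U\<^esup>\<close>, and \<open>dim A\<^bsub>N-n\<^esub> = dim A\<^sub>n\<close>.\<close>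
lemma window_space_subset_if_orthogonal_trivial:
  fixes U :: "'a::field poly set"
  assumes b: "1 \<le> b" and n: "n \<le> a + b - 2"
    and U: "poly_vs.subspace U" "U \<subseteq> window_space a b n"
    and orth: "\<And>g. g \<in> window_space a b (a + b - 2 - n) \<Longrightarrow> \<forall>u\<in>U. socle_pairing b g u = 0 \<Longrightarrow> g = 0"
  shows "window_space a b n \<subseteq> U"
proof -
  let ?M = "\<lambda>n. (\<lambda>j. monom 1 j) ` {j. in_window a b n j} :: 'a poly set"
  have span_M: "window_space a b k = poly_vs.span (?M k)" for k by (rule window_space_eq_span)
  have "U \<subseteq> {p. degree p \<le> n}" using U(2) degree_le_if_in_window_space by blast
  then obtain B where B: "finite B" "poly_vs.independent B" "poly_vs.span B = U"
    using degree_le_subspace_basis[OF U(1)] by metis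
  have "card (?M (a + b - 2 - n)) \<le> card B"
  proof (rule independent_card_le_if_separating[OF B(1) independent_monoms])
    fix g assume g: "g \<in> poly_vs.span (?M (a + b - 2 - n))" and "\<forall>u\<in>B. socle_pairing b g u = 0"
    then have "U \<subseteq> {u. socle_pairing b g u = 0}"
      using poly_vs.span_minimal[OF _ subspace_socle_pairing_eq_0] B(3) by blast
    then show "g = 0" using orth g span_M by blast
  qed (simp_all add: socle_pairing_def distrib_right)
  then have "card (?M n) \<le> card B"
    using card_in_window_flip[OF b n] by (simp only: card_monoms)
  moreover have "B \<subseteq> poly_vs.span (?M n)" using B(3) U(2) span_M poly_vs.span_superset by blast
  ultimately have "poly_vs.span (?M n) \<subseteq> U"
    using span_subset_of_independent_card_ge[OF _ B(2)] B(3) by (simp add: finite_in_window)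
  then show ?thesis using span_M by simp
qed

text \<open>Taken among all polynomials of degree \<open>\<le> N - n\<close>, not only those supported in the window:
  multiplication by \<open>(y - c)\<^sup>d\<close> leaves the window but respects this degree bound.\<close>
definition annihilator :: "nat \<Rightarrow> nat \<Rightarrow> nat \<Rightarrow> 'a::comm_ring_1 poly set \<Rightarrow> 'a poly set" where
  "annihilator a b n U = {g. degree g \<le> a + b - 2 - n \<and> (\<forall>f\<in>U. socle_pairing b g f = 0)}"

lemma annihilator_subset_degree_le: "annihilator a b n U \<subseteq> {g. degree g \<le> a + b - 2 - n}"
  by (auto simp: annihilator_def)

lemma subspace_annihilator: "poly_vs.subspace (annihilator a b n (U :: 'a::field poly set))"
  unfolding poly_vs.subspace_def annihilator_def socle_pairing_def
  by (auto simp: algebra_simps intro: order_trans[OF degree_add_le_max] order_trans[OF degree_smult_le])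

lemma window_mult_inj_on:
  fixes a b n :: nat and U :: "'a::field poly set"
  defines "V \<equiv> annihilator a b n U"
  assumes ab: "1 \<le> a" "1 \<le> b" and U: "poly_vs.subspace U" "U \<subseteq> window_space a b n"
    and generic: "\<forall>v\<in>V. [:-c, 1:] ^ poly_vs.dim V dvd v \<longrightarrow> v = 0"
    and n: "n \<le> a + b - 2" and d: "d < poly_vs.dim V"
  shows "inj_on (\<lambda>f. window_trunc a b (n + d) ([:-c, 1:] ^ d * f)) U"
proof -
  let ?N = "a + b - 2" and ?r = "[:-c, 1:]"
  interpret F: module_hom smult smult "\<lambda>f. window_trunc a b (n + d) (?r ^ d * f)"
    by (rule module_hom_window_trunc_mult)
  have V: "poly_vs.subspace V" "V \<subseteq> {g. degree g \<le> ?N - n}"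
    unfolding V_def by (rule subspace_annihilator annihilator_subset_degree_le)+
  have "n + d \<le> ?N" using n d dim_le_Suc_if_degree_le[OF V(2)] by linarith
  show ?thesis
    unfolding F.inj_on_iff_eq_0[OF U(1)]
  proof (intro ballI impI)
    fix f assume f: "f \<in> U" and Ff: "window_trunc a b (n + d) (?r ^ d * f) = 0"
    have deg_f: "degree f \<le> n" using f U(2) degree_le_if_in_window_space by blast
    have "coeff f j = 0" for j
    proof (cases "in_window a b n j")
      case True
      then have j: "j < b" "degree (monom 1 (b - 1 - j) :: 'a poly) \<le> ?N - n"
        by (auto simp: in_window_def degree_monom_eq)
      obtain v g where v: "v \<in> V" and g: "monom 1 (b - 1 - j) = v + ?r ^ d * g" "degree g \<le> ?N - n - d"
        by (rule decompose_mod_subspace[OF V generic less_imp_le[OF d] j(2)])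
      have "coeff f j = socle_pairing b (v + ?r ^ d * g) f"
        using socle_pairing_monom[OF j(1), of f] unfolding g(1) by simp
      also have "\<dots> = socle_pairing b (?r ^ d * g) f"
        using v f by (simp add: V_def annihilator_def socle_pairing_def distrib_right)
      also have "\<dots> = socle_pairing b g (window_trunc a b (n + d) (?r ^ d * f))"
        using socle_pairing_window_trunc_mult[OF ab \<open>n + d \<le> ?N\<close> _ deg_f] g(2)
        by (simp add: degree_power_eq)
      finally show ?thesis using Ff by (simp add: socle_pairing_def)
    next
      case False
      then show ?thesis using f U(2) by (auto simp: window_space_def)
    qed
    then show "f = 0" by (simp add: poly_eqI)
  qed
qed

lemma window_space_subset_window_mult_image:
  fixes a b n :: nat and U :: "'a::field poly set"
  defines "V \<equiv> annihilator a b n U"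
  assumes ab: "1 \<le> a" "1 \<le> b" and U: "poly_vs.subspace U" "U \<subseteq> window_space a b n"
    and generic: "\<forall>v\<in>V. [:-c, 1:] ^ poly_vs.dim V dvd v \<longrightarrow> v = 0"
    and d: "poly_vs.dim V \<le> d"
  shows "window_space a b (n + d) \<subseteq> (\<lambda>f. window_trunc a b (n + d) ([:-c, 1:] ^ d * f)) ` U"
proof (cases "n + d \<le> a + b - 2")
  case True
  let ?N = "a + b - 2" and ?r = "[:-c, 1:]"
  let ?F = "\<lambda>f. window_trunc a b (n + d) (?r ^ d * f)"
  interpret F: module_hom smult smult ?F by (rule module_hom_window_trunc_mult)
  show ?thesis
  proof (rule window_space_subset_if_orthogonal_trivial[OF ab(2) True])
    show "poly_vs.subspace (?F ` U)" by (rule F.subspace_image[OF U(1)])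
    show "?F ` U \<subseteq> window_space a b (n + d)" by (auto intro: window_trunc_in_window_space)
    fix g assume g: "g \<in> window_space a b (?N - (n + d))" and orth: "\<forall>u\<in>?F ` U. socle_pairing b g u = 0"
    have deg_g: "degree g \<le> ?N - (n + d)" using g by (rule degree_le_if_in_window_space)
    have "?r ^ d * g \<in> V"
    proof -
      have "socle_pairing b (?r ^ d * g) f = socle_pairing b g (?F f)" if f: "f \<in> U" for f
      proof -
        have "degree f \<le> n" using f U(2) degree_le_if_in_window_space by blast
        then show ?thesis
          by (rule socle_pairing_window_trunc_mult[OF ab True deg_g, symmetric]) (simp add: degree_power_eq)
      qed
      then have "\<forall>f\<in>U. socle_pairing b (?r ^ d * g) f = 0" using orth by auto
      moreover have "degree (?r ^ d * g) \<le> ?N - n"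
        using deg_g True degree_mult_le[of "?r ^ d" g] by (simp add: degree_power_eq)
      ultimately show ?thesis by (simp add: V_def annihilator_def)
    qed
    moreover have "?r ^ poly_vs.dim V dvd ?r ^ d * g" using d by (simp add: le_imp_power_dvd)
    ultimately have "?r ^ d * g = 0" using generic by blast
    then show "g = 0" by simp
  qed
next
  case False
  then have "window_space a b (n + d) = ({0} :: 'a poly set)" by (intro window_space_eq_zero) simp
  then show ?thesis
    using poly_vs.subspace_0[OF U(1)]
    by (auto intro!: image_eqI[where x = 0] poly_eqI simp: coeff_window_trunc)
qed

text \<open>Each annihilator has only finitely many points \<open>c\<close> where one of its nonzero elements vanishes
  to order \<open>dim\<close>; any \<open>c\<close> avoiding all of them works in every degree.\<close>
theorem window_family_maximal_rank:
  fixes U :: "nat \<Rightarrow> 'a::field_char_0 poly set"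
  assumes ab: "1 \<le> a" "1 \<le> b"
    and U: "\<And>n. poly_vs.subspace (U n)" "\<And>n. U n \<subseteq> window_space a b n"
    and closed: "\<And>n d c f. f \<in> U n \<Longrightarrow> window_trunc a b (n + d) ([:-c, 1:] ^ d * f) \<in> U (n + d)"
  obtains c where "\<forall>n d. inj_on (\<lambda>f. window_trunc a b (n + d) ([:-c, 1:] ^ d * f)) (U n) \<or>
      (\<lambda>f. window_trunc a b (n + d) ([:-c, 1:] ^ d * f)) ` U n = U (n + d)"
proof -
  let ?V = "\<lambda>n. annihilator a b n (U n)"
  let ?bad = "\<lambda>n. {c. \<exists>g\<in>?V n. g \<noteq> 0 \<and> [:-c, 1:] ^ poly_vs.dim (?V n) dvd g}"
  have "finite (\<Union>n\<le>a + b - 2. ?bad n)"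
    using finite_roots_of_order_dim[OF subspace_annihilator annihilator_subset_degree_le] by blast
  then obtain c where c: "c \<notin> (\<Union>n\<le>a + b - 2. ?bad n)"
    using ex_new_if_finite[OF infinite_UNIV_char_0] by blast
  let ?F = "\<lambda>n d f. window_trunc a b (n + d) ([:-c, 1:] ^ d * f)"
  have "inj_on (?F n d) (U n) \<or> ?F n d ` U n = U (n + d)" for n d
  proof (cases "n \<le> a + b - 2")
    case True
    then have generic: "\<forall>g\<in>?V n. [:-c, 1:] ^ poly_vs.dim (?V n) dvd g \<longrightarrow> g = 0"
      using c by blast
    show ?thesis
    proof (cases "d < poly_vs.dim (?V n)")
      case True
      then show ?thesis using window_mult_inj_on[OF ab U generic \<open>n \<le> a + b - 2\<close>] by blast
    next
      case False
      then have "window_space a b (n + d) \<subseteq> ?F n d ` U n"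
        using window_space_subset_window_mult_image[OF ab U generic] by simp
      then show ?thesis using U(2)[of "n + d"] closed by blast
    qed
  next
    case False
    then have "window_space a b n = ({0} :: 'a poly set)" by (intro window_space_eq_zero) simp
    then have "U n \<subseteq> {0}" using U(2)[of n] by blast
    then show ?thesis by (intro disjI1 inj_onI) blast
  qed
  then show ?thesis using that by blast
qed

section \<open>Dehomogenisation\<close>

lemma cx_eqI: "(\<And>i j. cx p i j = cx q i j) \<Longrightarrow> p = q"
  unfolding cx_def by (intro poly_eqI) blast

lemma cx_trunc: "cx (trunc a b p) i j = (if enat i < a \<and> enat j < b then cx p i j else 0)"
proof -
  have c1: "coeff (trunc a b p) j = (if j \<le> degree p then (\<Sum>i'\<le>degree (coeff p j).
       if enat i' < a \<and> enat j < b then monom (coeff (coeff p j) i') i' else 0) else 0)"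
    unfolding trunc_def by (simp add: coeff_sum coeff_monom if_distrib sum.delta cong: if_cong)
  show ?thesis
  proof (cases "j \<le> degree p")
    case False
    then have "coeff p j = 0" by (simp add: coeff_eq_0)
    then show ?thesis using False c1 by (simp add: cx_def)
  next
    case True
    have "cx (trunc a b p) i j = (\<Sum>i'\<le>degree (coeff p j).
       coeff (if enat i' < a \<and> enat j < b then monom (coeff (coeff p j) i') i' else 0) i)"
      unfolding cx_def c1 using True by (simp add: coeff_sum)
    also have "\<dots> = (\<Sum>i'\<le>degree (coeff p j). if i' = i then (if enat i < a \<and> enat j < b then coeff (coeff p j) i else 0) else 0)"
      by (intro sum.cong) (auto simp: coeff_monom)
    also have "\<dots> = (if i \<le> degree (coeff p j) then (if enat i < a \<and> enat j < b then coeff (coeff p j) i else 0) else 0)"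
      by (simp add: sum.delta)
    also have "\<dots> = (if enat i < a \<and> enat j < b then cx p i j else 0)"
      by (auto simp: cx_def coeff_eq_0)
    finally show ?thesis .
  qed
qed

lemma cx_0 [simp]: "cx 0 i j = 0"
  by (simp add: cx_def)

lemma cx_smult_const: "cx (smult [:c:] p) i j = c * cx p i j"
  by (simp add: cx_def)

lemma cx_mult: "cx (p * q) i j = (\<Sum>j1\<le>j. \<Sum>i1\<le>i. cx p i1 j1 * cx q (i - i1) (j - j1))"
  unfolding cx_def by (simp add: coeff_mult coeff_sum)

lemma trunc_eq_self_iff: "trunc a b p = p \<longleftrightarrow> (\<forall>i j. cx p i j \<noteq> 0 \<longrightarrow> enat i < a \<and> enat j < b)"
proof
  assume "trunc a b p = p"
  then show "\<forall>i j. cx p i j \<noteq> 0 \<longrightarrow> enat i < a \<and> enat j < b" by (metis cx_trunc)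
qed (intro cx_eqI, metis cx_trunc)

lemma trunc_trunc [simp]: "trunc a b (trunc a b p) = trunc a b p"
  by (rule cx_eqI) (simp add: cx_trunc)

lemma trunc_mult_trunc_left: "trunc a b (trunc a b p * q) = trunc a b (p * q)"
proof (rule cx_eqI)
  fix i j
  have "cx (trunc a b p * q) i j = cx (p * q) i j" if ij: "enat i < a \<and> enat j < b"
    unfolding cx_mult
  proof (intro sum.cong refl)
    fix j1 i1 assume "j1 \<in> {..j}" "i1 \<in> {..i}"
    then have "enat i1 < a \<and> enat j1 < b" using ij by (meson atMost_iff enat_ord_simps(1) le_less_trans)
    then show "cx (trunc a b p) i1 j1 * cx q (i - i1) (j - j1) = cx p i1 j1 * cx q (i - i1) (j - j1)"
      by (simp add: cx_trunc)
  qed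
  then show "cx (trunc a b (trunc a b p * q)) i j = cx (trunc a b (p * q)) i j"
    by (simp add: cx_trunc)
qed

lemma trunc_mult_trunc_right: "trunc a b (p * trunc a b q) = trunc a b (p * q)"
  using trunc_mult_trunc_left[of a b q p] by (simp add: mult.commute)

lemma trunc_power_mult: "trunc a b (trunc a b l ^ d * f) = trunc a b (l ^ d * f)"
proof (induction d arbitrary: f)
  case (Suc d)
  have "trunc a b (trunc a b l ^ Suc d * f) = trunc a b (l * trunc a b (trunc a b l ^ d * f))"
    by (simp add: mult.assoc trunc_mult_trunc_left trunc_mult_trunc_right)
  also have "\<dots> = trunc a b (l ^ Suc d * f)"
    by (simp add: Suc mult.assoc trunc_mult_trunc_right)
  finally show ?case .
qed simp

lemma homogeneous_mult:
  assumes "homogeneous n p" "homogeneous m q"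
  shows "homogeneous (n + m) (p * q)"
  unfolding homogeneous_def
proof (intro allI impI)
  fix i j assume "cx (p * q) i j \<noteq> 0"
  then obtain j1 i1 where "j1 \<le> j" "i1 \<le> i" and nz: "cx p i1 j1 * cx q (i - i1) (j - j1) \<noteq> 0"
    unfolding cx_mult by (meson atMost_iff sum.not_neutral_contains_not_neutral)
  moreover have "i1 + j1 = n" "(i - i1) + (j - j1) = m"
    using assms nz unfolding homogeneous_def by (metis mult_not_zero)+
  ultimately show "i + j = n + m" by simp
qed

lemma homogeneous_power: "homogeneous 1 l \<Longrightarrow> homogeneous d (l ^ d)"
proof (induction d)
  case 0
  then show ?case by (auto simp: homogeneous_def cx_def coeff_1 split: if_splits)
next
  case (Suc d)
  then show ?case using homogeneous_mult[of 1 l d "l ^ d"] by simp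
qed

lemma homogeneous_add: "homogeneous n p \<Longrightarrow> homogeneous n q \<Longrightarrow> homogeneous n (p + q)"
  unfolding homogeneous_def cx_def by (metis add.right_neutral coeff_add)

lemma homogeneous_trunc: "homogeneous n p \<Longrightarrow> homogeneous n (trunc a b p)"
  unfolding homogeneous_def by (simp add: cx_trunc)

definition dehomog :: "'a::comm_ring_1 poly poly \<Rightarrow> 'a poly" where
  "dehomog p = map_poly (\<lambda>q. poly q 1) p"

lemma coeff_dehomog: "coeff (dehomog p) j = poly (coeff p j) 1"
  by (simp add: dehomog_def coeff_map_poly)

lemma dehomog_add: "dehomog (p + q) = dehomog p + dehomog q"
  by (rule poly_eqI) (simp add: coeff_dehomog)

lemma dehomog_smult_const: "dehomog (smult [:c:] p) = smult c (dehomog p)"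
  by (rule poly_eqI) (simp add: coeff_dehomog)

lemma dehomog_mult: "dehomog (p * q) = dehomog p * dehomog q"
  by (rule poly_eqI) (simp add: coeff_dehomog coeff_mult poly_sum)

lemma dehomog_power: "dehomog (p ^ d) = dehomog p ^ d"
proof (induction d)
  case 0
  show ?case by (rule poly_eqI) (simp add: coeff_dehomog coeff_1)
qed (simp add: dehomog_mult)

lemma coeff_dehomog_homogeneous:
  assumes "homogeneous n p"
  shows "coeff (dehomog p) j = (if j \<le> n then cx p (n - j) j else 0)"
proof -
  have "coeff (dehomog p) j = (\<Sum>i\<le>degree (coeff p j). coeff (coeff p j) i)"
    by (simp add: coeff_dehomog poly_altdef)
  also have "\<dots> = (\<Sum>i\<le>degree (coeff p j). if i = n - j \<and> j \<le> n then coeff (coeff p j) i else 0)"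
  proof (intro sum.cong refl)
    fix i
    show "coeff (coeff p j) i = (if i = n - j \<and> j \<le> n then coeff (coeff p j) i else 0)"
    proof (cases "coeff (coeff p j) i = 0")
      case False
      then have "i + j = n" using assms unfolding homogeneous_def cx_def by blast
      then show ?thesis by auto
    qed auto
  qed
  also have "\<dots> = (if j \<le> n then cx p (n - j) j else 0)"
    by (auto simp: sum.delta cx_def coeff_eq_0 cong: if_cong)
  finally show ?thesis .
qed

lemma inj_on_dehomog: "inj_on dehomog {p. homogeneous n p}"
proof (rule inj_onI, rule cx_eqI)
  fix p q i j assume p: "p \<in> {p. homogeneous n p}" and q: "q \<in> {p. homogeneous n p}"
    and eq: "dehomog p = dehomog q"
  show "cx p i j = cx q i j"
  proof (cases "i + j = n")
    case True
    then show ?thesis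
      using arg_cong[OF eq, of "\<lambda>p. coeff p j"] p q by (auto simp: coeff_dehomog_homogeneous)
  next
    case False
    then have "cx p i j = 0" "cx q i j = 0" using p q by (auto simp: homogeneous_def)
    then show ?thesis by simp
  qed
qed

lemma dehomog_in_window_space:
  assumes "p \<in> CL_ring (enat a) (enat b)" "homogeneous n p"
  shows "dehomog p \<in> window_space a b n"
proof -
  have bound: "cx p i j \<noteq> 0 \<Longrightarrow> i < a \<and> j < b" for i j
    using assms(1) by (auto simp: CL_ring_def trunc_eq_self_iff)
  show ?thesis unfolding window_space_def
  proof (intro CollectI allI impI)
    fix j assume "coeff (dehomog p) j \<noteq> 0"
    then have "j \<le> n" "cx p (n - j) j \<noteq> 0"
      by (auto simp: coeff_dehomog_homogeneous[OF assms(2)] split: if_splits)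
    then show "in_window a b n j" using bound[of "n - j" j] by (auto simp: in_window_def)
  qed
qed

lemma dehomog_trunc:
  assumes "homogeneous n p"
  shows "dehomog (trunc (enat a) (enat b) p) = window_trunc a b n (dehomog p)"
  by (rule poly_eqI) (auto simp: coeff_dehomog_homogeneous[OF homogeneous_trunc[OF assms]]
      coeff_dehomog_homogeneous[OF assms] coeff_window_trunc cx_trunc in_window_def)

definition y_minus_cx :: "'a::comm_ring_1 \<Rightarrow> 'a poly poly" where
  "y_minus_cx c = var_y - smult [:c:] var_x"

lemma y_minus_cx_eq: "y_minus_cx c = [:[:0, -c:], 1:]"
  by (simp add: y_minus_cx_def var_x_def var_y_def)

lemma homogeneous_y_minus_cx: "homogeneous 1 (y_minus_cx c)"
  by (auto simp: homogeneous_def cx_def y_minus_cx_eq coeff_pCons split: nat.splits)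

lemma dehomog_y_minus_cx: "dehomog (y_minus_cx c) = [:-c, 1:]"
  by (rule poly_eqI) (auto simp: coeff_dehomog y_minus_cx_eq coeff_pCons split: nat.splits)

lemma homog_ideal_trunc_eq:
  "CL_homog_ideal a b I \<Longrightarrow> p \<in> I \<Longrightarrow> trunc a b p = p"
  by (auto simp: CL_homog_ideal_def CL_ring_def)

lemma homog_ideal_trunc_mult:
  assumes "CL_homog_ideal a b I" "p \<in> I"
  shows "trunc a b (r * p) \<in> I"
proof -
  have "CL_mult a b (trunc a b r) p \<in> I"
    using assms by (simp add: CL_homog_ideal_def CL_ring_def)
  then show ?thesis by (simp add: CL_mult_def trunc_mult_trunc_left)
qed

lemma homog_ideal_smult_const:
  assumes "CL_homog_ideal a b I" "p \<in> I"
  shows "smult [:c:] p \<in> I"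
proof -
  have "trunc a b ([:[:c:]:] * p) = smult [:c:] (trunc a b p)"
    by (rule cx_eqI) (simp add: cx_trunc cx_smult_const)
  then show ?thesis
    using homog_ideal_trunc_mult[OF assms, of "[:[:c:]:]"] homog_ideal_trunc_eq[OF assms] by simp
qed

lemma homog_ideal_trunc_mult_graded_piece:
  assumes "CL_homog_ideal a b I" "p \<in> graded_piece I n" "homogeneous d r"
  shows "trunc a b (r * p) \<in> graded_piece I (n + d)"
  using assms homog_ideal_trunc_mult[OF assms(1)] homogeneous_trunc homogeneous_mult[of d r n p]
  by (simp add: graded_piece_def add.commute)

lemma subspace_dehomog_graded_piece:
  fixes I :: "'a::field poly poly set"
  assumes I: "CL_homog_ideal a b I"
  shows "poly_vs.subspace (dehomog ` graded_piece I n)"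
  unfolding poly_vs.subspace_def
proof (intro conjI ballI allI)
  have "0 \<in> graded_piece I n" using I by (simp add: CL_homog_ideal_def graded_piece_def homogeneous_def cx_def)
  then show "0 \<in> dehomog ` graded_piece I n"
    by (rule image_eqI[rotated]) (simp add: dehomog_def)
next
  fix x y assume "x \<in> dehomog ` graded_piece I n" "y \<in> dehomog ` graded_piece I n"
  then obtain p q where "p \<in> graded_piece I n" "q \<in> graded_piece I n" "x = dehomog p" "y = dehomog q"
    by blast
  moreover have "p + q \<in> graded_piece I n" if "p \<in> graded_piece I n" "q \<in> graded_piece I n" for p q
    using that I by (auto simp: graded_piece_def CL_homog_ideal_def homogeneous_add)
  ultimately show "x + y \<in> dehomog ` graded_piece I n" by (metis dehomog_add image_eqI)
next
  fix c x assume "x \<in> dehomog ` graded_piece I n"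
  then obtain p where p: "p \<in> graded_piece I n" "x = dehomog p" by blast
  then have "smult [:c:] p \<in> graded_piece I n"
    using homog_ideal_smult_const[OF I] by (auto simp: graded_piece_def homogeneous_def cx_smult_const)
  then show "smult c x \<in> dehomog ` graded_piece I n"
    using p(2) by (metis dehomog_smult_const image_eqI)
qed

lemma inj_on_semiconj:
  assumes "inj_on h A" "\<And>x. x \<in> A \<Longrightarrow> h (G x) = F (h x)" "inj_on F (h ` A)"
  shows "inj_on G A"
proof (rule inj_onI)
  fix x y assume "x \<in> A" "y \<in> A" "G x = G y"
  then have "F (h x) = F (h y)" using assms(2) by metis
  then have "h x = h y" using inj_onD[OF assms(3)] \<open>x \<in> A\<close> \<open>y \<in> A\<close> by blast
  then show "x = y" using inj_onD[OF assms(1)] \<open>x \<in> A\<close> \<open>y \<in> A\<close> by blast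
qed

lemma image_eq_semiconj:
  assumes "inj_on h B" "G ` A \<subseteq> B" "\<And>x. x \<in> A \<Longrightarrow> h (G x) = F (h x)" "F ` h ` A = h ` B"
  shows "G ` A = B"
proof
  show "B \<subseteq> G ` A"
  proof
    fix y assume y: "y \<in> B"
    then have "h y \<in> F ` h ` A" using assms(4) by blast
    then obtain x where x: "x \<in> A" "h y = F (h x)" by blast
    then have "h y = h (G x)" using assms(3) by simp
    then have "y = G x" using inj_onD[OF assms(1)] y assms(2) x(1) by blast
    then show "y \<in> G ` A" using x(1) by blast
  qed
qed (rule assms(2))

lemma graded_piece_y_minus_cx_power_mult:
  assumes I: "CL_homog_ideal (enat a) (enat b) I" and p: "p \<in> graded_piece I n"
  shows "trunc (enat a) (enat b) (y_minus_cx c ^ d * p) \<in> graded_piece I (n + d)"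
    and "dehomog (trunc (enat a) (enat b) (y_minus_cx c ^ d * p)) =
      window_trunc a b (n + d) ([:-c, 1:] ^ d * dehomog p)"
proof -
  have hom: "homogeneous d (y_minus_cx c ^ d)" by (rule homogeneous_power[OF homogeneous_y_minus_cx])
  show "trunc (enat a) (enat b) (y_minus_cx c ^ d * p) \<in> graded_piece I (n + d)"
    by (rule homog_ideal_trunc_mult_graded_piece[OF I p hom])
  have "homogeneous (n + d) (y_minus_cx c ^ d * p)"
    using homogeneous_mult[OF hom, of n p] p by (simp add: graded_piece_def add.commute)
  then show "dehomog (trunc (enat a) (enat b) (y_minus_cx c ^ d * p)) =
      window_trunc a b (n + d) ([:-c, 1:] ^ d * dehomog p)"
    by (simp add: dehomog_trunc dehomog_mult dehomog_power dehomog_y_minus_cx)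
qed

lemma dehomog_graded_piece_subset_window_space:
  "CL_homog_ideal (enat a) (enat b) I \<Longrightarrow> dehomog ` graded_piece I n \<subseteq> window_space a b n"
  unfolding graded_piece_def by (auto intro: dehomog_in_window_space simp: CL_homog_ideal_def)

lemma window_trunc_mult_dehomog_graded_piece:
  assumes "CL_homog_ideal (enat a) (enat b) I" "f \<in> dehomog ` graded_piece I n"
  shows "window_trunc a b (n + d) ([:-c, 1:] ^ d * f) \<in> dehomog ` graded_piece I (n + d)"
proof -
  obtain p where p: "p \<in> graded_piece I n" "f = dehomog p" using assms(2) by blast
  show ?thesis
    unfolding p(2) graded_piece_y_minus_cx_power_mult(2)[OF assms(1) p(1), symmetric]
    by (rule imageI[OF graded_piece_y_minus_cx_power_mult(1)[OF assms(1) p(1)]])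
qed

theorem strong_lefschetz_finite:
  fixes I :: "'k::field_char_0 poly poly set" and a b :: nat
  assumes I: "CL_homog_ideal (enat a) (enat b) I" and ab: "1 \<le> a" "1 \<le> b"
  shows "strong_lefschetz (enat a) (enat b) I"
proof -
  let ?T = "trunc (enat a) (enat b)" and ?P = "graded_piece I"
  obtain c where c: "\<forall>n d. inj_on (\<lambda>f. window_trunc a b (n + d) ([:-c, 1:] ^ d * f)) (dehomog ` ?P n) \<or>
      (\<lambda>f. window_trunc a b (n + d) ([:-c, 1:] ^ d * f)) ` dehomog ` ?P n = dehomog ` ?P (n + d)"
    by (rule window_family_maximal_rank[OF ab subspace_dehomog_graded_piece[OF I]
          dehomog_graded_piece_subset_window_space[OF I] window_trunc_mult_dehomog_graded_piece[OF I]])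
  define l where "l = ?T (y_minus_cx c)"
  have l: "l \<in> graded_piece (CL_ring (enat a) (enat b)) 1"
    using homogeneous_trunc[OF homogeneous_y_minus_cx] by (simp add: l_def graded_piece_def CL_ring_def)
  have max_rank: "inj_on (\<lambda>f. ?T (l ^ d * f)) (?P i) \<or> (\<lambda>f. ?T (l ^ d * f)) ` ?P i = ?P (i + d)" for d i
  proof -
    define F where "F = (\<lambda>f. window_trunc a b (i + d) ([:-c, 1:] ^ d * f))"
    define G where "G = (\<lambda>f. ?T (l ^ d * f))"
    have G_eq: "G f = ?T (y_minus_cx c ^ d * f)" for f by (simp add: G_def l_def trunc_power_mult)
    have semiconj: "dehomog (G p) = F (dehomog p)" if "p \<in> ?P i" for p
      using graded_piece_y_minus_cx_power_mult(2)[OF I that] by (simp add: G_eq F_def)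
    have G_into: "G ` ?P i \<subseteq> ?P (i + d)"
      using graded_piece_y_minus_cx_power_mult(1)[OF I] by (auto simp: G_eq)
    have dehomog_inj: "inj_on dehomog (?P n)" for n
      by (rule inj_on_subset[OF inj_on_dehomog]) (auto simp: graded_piece_def)
    have "inj_on F (dehomog ` ?P i) \<or> F ` dehomog ` ?P i = dehomog ` ?P (i + d)"
      using c unfolding F_def by blast
    then have "inj_on G (?P i) \<or> G ` ?P i = ?P (i + d)"
      using inj_on_semiconj[of dehomog "?P i" G F, OF dehomog_inj semiconj]
        image_eq_semiconj[of dehomog "?P (i + d)" G "?P i" F, OF dehomog_inj G_into semiconj]
      by blast
    then show ?thesis by (simp add: G_def)
  qed
  show ?thesis
    unfolding strong_lefschetz_def by (intro bexI[OF _ l] allI impI max_rank)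
qed

section \<open>Zero and infinite exponents\<close>

lemma strong_lefschetz_trivial_ring:
  assumes I: "CL_homog_ideal a b I" and ab: "a = 0 \<or> b = 0"
  shows "strong_lefschetz a b I"
proof -
  have trunc_0: "trunc a b p = 0" for p by (rule cx_eqI) (use ab in \<open>auto simp: cx_trunc\<close>)
  have "p = 0" if "p \<in> I" for p
    using that I trunc_0[of p] by (auto simp: CL_homog_ideal_def CL_ring_def)
  then have "I \<subseteq> {0}" by blast
  then have "inj_on f (graded_piece I i)" for f i by (intro inj_onI) (auto simp: graded_piece_def)
  moreover have "0 \<in> graded_piece (CL_ring a b) 1"
    using trunc_0 by (simp add: graded_piece_def CL_ring_def homogeneous_def cx_def)
  ultimately show ?thesis unfolding strong_lefschetz_def by blast
qed

lemma strong_lefschetz_if_nonzerodivisor: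
  fixes l :: "'k::idom poly poly" and I :: "'k poly poly set"
  assumes I: "I \<subseteq> CL_ring a b" and l: "l \<in> graded_piece (CL_ring a b) 1" "l \<noteq> 0"
    and nzd: "\<And>d f. f \<in> CL_ring a b \<Longrightarrow> trunc a b (l ^ d * f) = l ^ d * f"
  shows "strong_lefschetz a b I"
proof -
  have "inj_on (\<lambda>f. trunc a b (l ^ d * f)) (graded_piece I i)" for d i
  proof (rule inj_onI)
    fix f g assume fg: "f \<in> graded_piece I i" "g \<in> graded_piece I i"
      and eq: "trunc a b (l ^ d * f) = trunc a b (l ^ d * g)"
    have "f \<in> CL_ring a b" "g \<in> CL_ring a b" using fg I by (auto simp: graded_piece_def)
    then have "l ^ d * f = l ^ d * g" using eq nzd by metis
    then show "f = g" using l(2) by simp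
  qed
  then show ?thesis unfolding strong_lefschetz_def using l(1) by blast
qed

lemma cx_var_x: "cx var_x i j = (if i = 1 \<and> j = 0 then 1 else 0)"
  by (cases j; cases i) (auto simp: var_x_def cx_def coeff_pCons split: nat.splits)

lemma cx_var_y: "cx var_y i j = (if i = 0 \<and> j = 1 then 1 else 0)"
  by (cases j; cases i) (auto simp: var_y_def cx_def coeff_pCons split: nat.splits)

lemma cx_var_x_power_mult: "cx (var_x ^ d * f) i j = (if i < d then 0 else cx f (i - d) j)"
proof -
  have var_x_power: "var_x ^ d = [:monom 1 d:]" by (induction d) (simp_all add: var_x_def monom_Suc)
  show ?thesis by (simp add: var_x_power cx_def coeff_monom_mult)
qed

lemma cx_var_y_power_mult: "cx (var_y ^ d * f) i j = (if j < d then 0 else cx f i (j - d))"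
proof -
  have var_y_power: "var_y ^ d = monom 1 d" by (induction d) (simp_all add: var_y_def monom_Suc)
  show ?thesis by (simp add: var_y_power cx_def coeff_monom_mult)
qed

lemma strong_lefschetz_a_infinite:
  assumes "CL_homog_ideal \<infinity> b I" "b \<noteq> 0"
  shows "strong_lefschetz \<infinity> b (I :: 'k::field poly poly set)"
proof (rule strong_lefschetz_if_nonzerodivisor)
  show "I \<subseteq> CL_ring \<infinity> b" using assms(1) by (simp add: CL_homog_ideal_def)
  have "enat 0 < b" using assms(2) by (metis not_gr_zero zero_enat_def)
  then have "trunc \<infinity> b var_x = var_x"
    unfolding trunc_eq_self_iff cx_var_x by simp
  moreover have "homogeneous 1 var_x" unfolding homogeneous_def cx_var_x by simp
  ultimately show "var_x \<in> graded_piece (CL_ring \<infinity> b) 1"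
    by (simp add: graded_piece_def CL_ring_def)
  show "var_x \<noteq> 0" by (simp add: var_x_def)
  fix d f assume "f \<in> CL_ring \<infinity> b"
  then show "trunc \<infinity> b (var_x ^ d * f) = var_x ^ d * f"
    unfolding CL_ring_def trunc_eq_self_iff by (auto simp: cx_var_x_power_mult split: if_splits)
qed

lemma strong_lefschetz_b_infinite:
  assumes "CL_homog_ideal a \<infinity> I" "a \<noteq> 0"
  shows "strong_lefschetz a \<infinity> (I :: 'k::field poly poly set)"
proof (rule strong_lefschetz_if_nonzerodivisor)
  show "I \<subseteq> CL_ring a \<infinity>" using assms(1) by (simp add: CL_homog_ideal_def)
  have "enat 0 < a" using assms(2) by (metis not_gr_zero zero_enat_def)
  then have "trunc a \<infinity> var_y = var_y"
    unfolding trunc_eq_self_iff cx_var_y by simp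
  moreover have "homogeneous 1 var_y" unfolding homogeneous_def cx_var_y by simp
  ultimately show "var_y \<in> graded_piece (CL_ring a \<infinity>) 1"
    by (simp add: graded_piece_def CL_ring_def)
  show "var_y \<noteq> 0" by (simp add: var_y_def)
  fix d f assume "f \<in> CL_ring a \<infinity>"
  then show "trunc a \<infinity> (var_y ^ d * f) = var_y ^ d * f"
    unfolding CL_ring_def trunc_eq_self_iff by (auto simp: cx_var_y_power_mult split: if_splits)
qed

theorem theorem3p9:
  fixes a b :: enat and I :: "'k::field_char_0 poly poly set"
  assumes "CL_homog_ideal a b I"
  shows "strong_lefschetz a b I"
proof (cases "a = 0 \<or> b = 0")
  case True
  then show ?thesis using strong_lefschetz_trivial_ring[OF assms] by blast
next
  case False
  consider "a = \<infinity>" | "b = \<infinity>" | a' b' where "a = enat a'" "b = enat b'" by (cases a; cases b) auto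
  then show ?thesis
  proof cases
    case 1
    then show ?thesis using strong_lefschetz_a_infinite[of b I] assms False by simp
  next
    case 2
    then show ?thesis using strong_lefschetz_b_infinite[of a I] assms False by simp
  next
    case 3
    moreover have "1 \<le> a'" "1 \<le> b'" using False 3 by (auto simp: enat_0_iff)
    ultimately show ?thesis using strong_lefschetz_finite[of a' b' I] assms by simp
  qed
qed

end
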